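(* Let $\mathbf Z=(Z_t)_{t\in[0,1]}$ be a process with continuous nonnegative paths such that $\max_{t\in[0,1]}Z_t=m$ a.s. for a constant $m\in[1,\infty)$ and $E(Z_t)=1$ for all $t$, let $U$ be uniformly distributed on $[0,1]$ and independent of $\mathbf Z$, set $\mathbf Y:=\mathbf Z/U$ and $\mathbf V:=-1/\mathbf Y$. Then for every $f\in\bar E^-[0,1]$ with $\|f\|_\infty\le m$ there is some $s_0<0$ such that \[ W_f(s):=P(\mathbf V\le s|f|)=1+s\|f\|_D,\qquad s_0\le s\le 0, \] where $\|f\|_D=E(\sup_{t\in[0,1]}(|f(t)|Z_t))$.
   Context: $E[0,1]$: bounded functions on $[0,1]$ with finitely many discontinuities; $\bar E^-[0,1]=\{f\in E[0,1]:f\le0\}$; $\|f\|_\infty=\sup_t|f(t)|$; inequalities are pointwise for all $t\in[0,1]$. *)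

theory Defs
  imports "HOL-Probability.Probability"
begin

definition E01 :: "(real \<Rightarrow> real) \<Rightarrow> bool" where
  "E01 f \<longleftrightarrow> bounded (f ` {0..1}) \<and>
     finite {t \<in> {0..1}. \<not> continuous (at t within {0..1}) f}"

definition E01_neg :: "(real \<Rightarrow> real) \<Rightarrow> bool" where
  "E01_neg f \<longleftrightarrow> E01 f \<and> (\<forall>t\<in>{0..1}. f t \<le> 0)"

definition sup_norm01 :: "(real \<Rightarrow> real) \<Rightarrow> real" where
  "sup_norm01 f = (SUP t\<in>{0..1}. \<bar>f t\<bar>)"

text \<open>Y := Z/U and V := -1/Y, with values in the extended reals
  (so Z_t = 0 gives V_t = -\<infinity>).\<close>
definition procY :: "(real \<Rightarrow> 'a \<Rightarrow> real) \<Rightarrow> ('a \<Rightarrow> real) \<Rightarrow> real \<Rightarrow> 'a \<Rightarrow> ereal" where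
  "procY Z U t \<omega> = ereal (Z t \<omega>) / ereal (U \<omega>)"

definition procV :: "(real \<Rightarrow> 'a \<Rightarrow> real) \<Rightarrow> ('a \<Rightarrow> real) \<Rightarrow> real \<Rightarrow> 'a \<Rightarrow> ereal" where
  "procV Z U t \<omega> = - (1 / procY Z U t \<omega>)"

definition Wf :: "'a measure \<Rightarrow> (real \<Rightarrow> 'a \<Rightarrow> real) \<Rightarrow> ('a \<Rightarrow> real) \<Rightarrow> (real \<Rightarrow> real) \<Rightarrow> real \<Rightarrow> real" where
  "Wf M Z U f s = measure M {\<omega> \<in> space M. \<forall>t\<in>{0..1}. procV Z U t \<omega> \<le> ereal (s * \<bar>f t\<bar>)}"

definition D_norm :: "'a measure \<Rightarrow> (real \<Rightarrow> 'a \<Rightarrow> real) \<Rightarrow> (real \<Rightarrow> real) \<Rightarrow> real" where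
  "D_norm M Z f = (\<integral>\<omega>. (SUP t\<in>{0..1}. \<bar>f t\<bar> * Z t \<omega>) \<partial>M)"

end

theory Submission
  imports Defs
begin

text \<open>Put \<open>g = sup\<^sub>t \<bar>f t\<bar> Z\<^sub>t\<close>. For \<open>s \<le> 0\<close> and \<open>U \<ge> 0\<close> the inequality \<open>-U/Z\<^sub>t \<le> s \<bar>f t\<bar>\<close>
  says \<open>-s \<bar>f t\<bar> Z\<^sub>t \<le> U\<close>, so the event \<open>V \<le> s\<bar>f\<bar>\<close> is \<open>{-s g \<le> U}\<close>. Since \<open>g \<le> m\<^sup>2\<close> a.s., for
  \<open>-1/m\<^sup>2 \<le> s \<le> 0\<close> the variable \<open>-s g\<close> lies in \<open>[0,1]\<close>, and as \<open>U\<close> is uniform and independent of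
  the path, \<open>P(-s g \<le> U) = E(1 + s g) = 1 + s \<parallel>f\<parallel>\<^sub>D\<close>. Independence requires \<open>g\<close> to be a
  measurable functional of the path: by continuity of \<open>Z\<close> the supremum may be taken over the
  countable set of rationals in \<open>[0,1]\<close> together with the finitely many discontinuities of \<open>f\<close>.\<close>

lemma cSUP_eq_cSUP_dense_subset:
  fixes h :: "'a::t2_space \<Rightarrow> 'b::{conditionally_complete_linorder, linorder_topology}"
  assumes bdd: "bdd_above (h ` S)" and "D \<subseteq> S" "D \<noteq> {}" and dense: "S \<subseteq> closure D"
    and cont: "\<And>t. t \<in> S - D \<Longrightarrow> continuous (at t within S) h"
  shows "(SUP t\<in>S. h t) = (SUP t\<in>D. h t)"
proof (rule antisym)
  have bddD: "bdd_above (h ` D)"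
    using bdd \<open>D \<subseteq> S\<close> by (meson bdd_above_mono image_mono)
  show "(SUP t\<in>S. h t) \<le> (SUP t\<in>D. h t)"
  proof (rule cSUP_least)
    show "S \<noteq> {}" using assms(2,3) by blast
  next
    fix t assume t: "t \<in> S"
    show "h t \<le> (SUP t\<in>D. h t)"
    proof (cases "t \<in> D")
      case True
      then show ?thesis using bddD by (rule cSUP_upper)
    next
      case False
      have "(h \<longlongrightarrow> h t) (at t within D)"
        using cont[of t] t False \<open>D \<subseteq> S\<close> unfolding continuous_within
        by (auto intro: tendsto_within_subset)
      moreover have "\<not> trivial_limit (at t within D)"
        using dense t False by (auto simp: trivial_limit_within islimpt_in_closure)
      moreover have "\<forall>\<^sub>F u in at t within D. h u \<le> (SUP t\<in>D. h t)"
        using bddD by (auto intro!: cSUP_upper always_eventually simp: eventually_at_filter)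
      ultimately show ?thesis
        by (intro tendsto_upperbound)
    qed
  qed
qed (use assms in \<open>auto intro: cSUP_subset_mono\<close>)

lemma closure_rationals_unit_interval: "closure ({0..1} \<inter> \<rat>) = {0..1::real}"
  by (simp add: closure_convex_Int_superset Rats_closure_real)

lemma ereal_cSUP:
  assumes "bdd_above (k ` D)" "D \<noteq> {}"
  shows "ereal (SUP t\<in>D. k t) = (SUP t\<in>D. ereal (k t))"
  using assms by (subst continuous_at_Sup_mono[of ereal])
    (auto simp: mono_def continuous_at_imp_continuous_at_within continuous_at_ereal image_comp)

lemma mult_cSUP_le_iff:
  fixes k :: "'a \<Rightarrow> real"
  assumes "bdd_above (k ` S)" "S \<noteq> {}" "0 \<le> c" "0 \<le> u"
  shows "c * (SUP t\<in>S. k t) \<le> u \<longleftrightarrow> (\<forall>t\<in>S. c * k t \<le> u)"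
proof (cases "c = 0")
  case False
  then have "0 < c" using assms(3) by simp
  then show ?thesis
    using assms(1,2) by (simp add: mult.commute[of c] flip: pos_le_divide_eq add: cSUP_le_iff)
qed (use assms in simp)

lemma E01_const: "E01 (\<lambda>_. c)"
  unfolding E01_def by (auto simp: image_constant_conv)

lemma E01_bdd_above_weighted_path:
  assumes "E01 a" and "continuous_on {0..1} x"
  shows "bdd_above ((\<lambda>t. \<bar>a t\<bar> * x t) ` {0..1})"
proof -
  obtain A where A: "\<And>t. t \<in> {0..1} \<Longrightarrow> \<bar>a t\<bar> \<le> A"
    using assms(1) unfolding E01_def bounded_iff by fastforce
  have "bounded (x ` {0..1})"
    using assms(2) by (intro compact_imp_bounded compact_continuous_image) auto
  then obtain B where B: "\<And>t. t \<in> {0..1} \<Longrightarrow> \<bar>x t\<bar> \<le> B"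
    unfolding bounded_iff by fastforce
  have "\<bar>a t\<bar> * x t \<le> A * B" if "t \<in> {0..1}" for t
    using A[OF that] B[OF that] abs_ge_self[of "x t"]
    by (smt (verit) abs_ge_zero mult_left_mono mult_right_mono)
  then show ?thesis by (intro bdd_aboveI2) auto
qed

lemma E01_weighted_sup_measurable_functional:
  assumes "E01 a"
  obtains h where "h \<in> borel_measurable (PiM {0..1} (\<lambda>_. borel))"
    and "\<And>x. continuous_on {0..1} x \<Longrightarrow> (SUP t\<in>{0..1}. \<bar>a t\<bar> * x t) = h x"
proof
  define D where "D = ({0..1} \<inter> \<rat>) \<union> {t\<in>{0..1}. \<not> continuous (at t within {0..1}) a}"
  have "countable D"
    using assms countable_rat unfolding D_def E01_def by (auto intro: countable_finite)
  \<comment> \<open>The supremum is taken in \<open>ereal\<close> so that \<open>h\<close> is measurable on all paths, including unbounded ones.\<close>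
  then show "(\<lambda>x. real_of_ereal (SUP t\<in>D. ereal (\<bar>a t\<bar> * x t))) \<in> borel_measurable (PiM {0..1} (\<lambda>_. borel))"
    by (intro borel_measurable_real_of_ereal borel_measurable_SUP) (auto simp: D_def)
  fix x :: "real \<Rightarrow> real"
  assume x: "continuous_on {0..1} x"
  have "D \<subseteq> {0..1}" "0 \<in> D"
    unfolding D_def by auto
  moreover have "{0..1} \<subseteq> closure D"
    using closure_mono[of "{0..1} \<inter> \<rat>" D] closure_rationals_unit_interval
    unfolding D_def by blast
  moreover have bdd: "bdd_above ((\<lambda>t. \<bar>a t\<bar> * x t) ` {0..1})"
    using E01_bdd_above_weighted_path[OF assms x] .
  moreover have "continuous (at t within {0..1}) (\<lambda>t. \<bar>a t\<bar> * x t)" if "t \<in> {0..1} - D" for t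
    using that x unfolding D_def by (auto intro!: continuous_intros simp: continuous_on_eq_continuous_within)
  ultimately have "(SUP t\<in>{0..1}. \<bar>a t\<bar> * x t) = (SUP t\<in>D. \<bar>a t\<bar> * x t)"
    by (intro cSUP_eq_cSUP_dense_subset) auto
  also have "\<dots> = real_of_ereal (SUP t\<in>D. ereal (\<bar>a t\<bar> * x t))"
    using bdd \<open>D \<subseteq> {0..1}\<close> \<open>0 \<in> D\<close>
    by (subst ereal_cSUP[symmetric]) (auto intro: bdd_above_mono[OF bdd image_mono])
  finally show "(SUP t\<in>{0..1}. \<bar>a t\<bar> * x t) = real_of_ereal (SUP t\<in>D. ereal (\<bar>a t\<bar> * x t))" .
qed

lemma E01_weighted_sup_measurable:
  assumes "E01 a"
    and G: "(\<lambda>\<omega>. \<lambda>t\<in>{0..1}. Z t \<omega>) \<in> measurable N (PiM {0..1} (\<lambda>_. borel))"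
    and Zc: "\<forall>\<omega>\<in>space N. continuous_on {0..1} (\<lambda>t. Z t \<omega>)"
  shows "(\<lambda>\<omega>. SUP t\<in>{0..1}. \<bar>a t\<bar> * Z t \<omega>) \<in> borel_measurable N"
proof -
  obtain h where h: "h \<in> borel_measurable (PiM {0..1} (\<lambda>_. borel))"
    and eq: "\<And>x. continuous_on {0..1} x \<Longrightarrow> (SUP t\<in>{0..1}. \<bar>a t\<bar> * x t) = h x"
    using E01_weighted_sup_measurable_functional[OF \<open>E01 a\<close>] by blast
  have sup_eq: "(SUP t\<in>{0..1}. \<bar>a t\<bar> * Z t \<omega>) = h (\<lambda>t\<in>{0..1}. Z t \<omega>)" if "\<omega> \<in> space N" for \<omega>
  proof -
    have "continuous_on {0..1} (\<lambda>t\<in>{0..1}. Z t \<omega>)"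
      by (rule continuous_on_eq[OF Zc[rule_format, OF that]]) simp
    then show ?thesis
      by (subst eq[symmetric]) (auto intro: SUP_cong)
  qed
  have "(\<lambda>\<omega>. h (\<lambda>t\<in>{0..1}. Z t \<omega>)) \<in> borel_measurable N"
    using measurable_comp[OF G h] by (simp add: comp_def)
  then show ?thesis
    by (subst measurable_cong[OF sup_eq])
qed

lemma E01_weighted_sup_bounds:
  assumes "E01 a" and x: "continuous_on {0..1} x" "\<forall>t\<in>{0..1}. 0 \<le> x t"
    and "sup_norm01 a \<le> c" and "(SUP t\<in>{0..1}. x t) \<le> d"
  shows "0 \<le> (SUP t\<in>{0..1}. \<bar>a t\<bar> * x t)" and "(SUP t\<in>{0..1}. \<bar>a t\<bar> * x t) \<le> c * d"
proof -
  have bdd: "bdd_above ((\<lambda>t. \<bar>a t\<bar> * x t) ` {0..1})"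
    using E01_bdd_above_weighted_path[OF assms(1) x(1)] .
  then show "0 \<le> (SUP t\<in>{0..1}. \<bar>a t\<bar> * x t)"
    using x(2) by (intro cSUP_upper2[of _ _ 0]) auto
  have "bdd_above ((\<lambda>t. \<bar>a t\<bar>) ` {0..1})"
    using E01_bdd_above_weighted_path[OF assms(1) continuous_on_const, of 1] by simp
  then have "\<bar>a t\<bar> \<le> c" if "t \<in> {0..1}" for t
    using cSUP_upper[OF that] assms(4) unfolding sup_norm01_def by fastforce
  moreover have "bdd_above (x ` {0..1})"
    using E01_bdd_above_weighted_path[OF E01_const x(1), of 1] by simp
  then have "x t \<le> d" if "t \<in> {0..1}" for t
    using cSUP_upper[OF that] assms(5) by fastforce
  ultimately have "\<bar>a t\<bar> * x t \<le> c * d" if "t \<in> {0..1}" for t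
    using that x(2) by (meson abs_ge_zero mult_mono order.trans)
  then show "(SUP t\<in>{0..1}. \<bar>a t\<bar> * x t) \<le> c * d"
    by (intro cSUP_least) auto
qed

lemma AE_E01_weighted_sup_bounds:
  assumes "\<forall>\<omega>\<in>space M. continuous_on {0..1} (\<lambda>t. Z t \<omega>)"
    and "\<forall>\<omega>\<in>space M. \<forall>t\<in>{0..1}. 0 \<le> Z t \<omega>"
    and "AE \<omega> in M. (SUP t\<in>{0..1}. Z t \<omega>) \<le> d"
    and "E01 a" and "sup_norm01 a \<le> c"
  shows "AE \<omega> in M. 0 \<le> (SUP t\<in>{0..1}. \<bar>a t\<bar> * Z t \<omega>) \<and> (SUP t\<in>{0..1}. \<bar>a t\<bar> * Z t \<omega>) \<le> c * d"
  using assms(3) AE_space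
  by eventually_elim (use E01_weighted_sup_bounds[OF assms(4) _ _ assms(5)] assms(1,2) in auto)

lemma neg_inverse_ereal_ratio_le_iff:
  fixes z u b :: real
  assumes "0 \<le> z" and "b \<le> 0"
  shows "- (1 / (ereal z / ereal u)) \<le> ereal b \<longleftrightarrow> (if 0 \<le> u then - b * z \<le> u else z = 0)"
proof -
  consider "z = 0" | "0 < z" "u = 0" | "0 < z" "u \<noteq> 0"
    using assms(1) by linarith
  then show ?thesis
  proof cases
    case 1
    then show ?thesis by (simp add: divide_ereal_def)
  next
    case 2
    then show ?thesis using assms(2) by (simp add: divide_ereal_def zero_le_mult_iff)
  next
    case 3
    then have "1 / ereal (z / u) = ereal (u / z)"
      by (subst one_ereal_def, subst ereal_divide) auto
    then have "- (1 / (ereal z / ereal u)) = ereal (- (u / z))"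
      using 3 by simp
    then show ?thesis using 3 assms(2) mult_nonpos_nonneg[of b z]
      by (auto simp: field_simps)
  qed
qed

lemma AE_nonneg_uniform_unit_interval:
  fixes U :: "'a \<Rightarrow> real"
  assumes "U \<in> borel_measurable M" and "distr M borel U = uniform_measure lborel {0..1}"
  shows "AE \<omega> in M. 0 \<le> U \<omega>"
proof -
  have "AE u in distr M borel U. 0 \<le> u"
    unfolding assms(2) by (subst AE_uniform_measure) auto
  then show ?thesis
    using assms(1) by (subst (asm) AE_distr_iff) auto
qed

lemma procV_le_iff_weighted_sup:
  assumes Zc: "continuous_on {0..1} (\<lambda>t. Z t \<omega>)" and Zn: "\<forall>t\<in>{0..1}. 0 \<le> Z t \<omega>"
    and "E01 f" and "s \<le> 0"
  shows "(\<forall>t\<in>{0..1}. procV Z U t \<omega> \<le> ereal (s * \<bar>f t\<bar>)) \<longleftrightarrow>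
    (if 0 \<le> U \<omega> then - s * (SUP t\<in>{0..1}. \<bar>f t\<bar> * Z t \<omega>) \<le> U \<omega> else (SUP t\<in>{0..1}. Z t \<omega>) \<le> 0)"
proof -
  have bdd: "bdd_above ((\<lambda>t. \<bar>f t\<bar> * Z t \<omega>) ` {0..1})" "bdd_above ((\<lambda>t. Z t \<omega>) ` {0..1})"
    using E01_bdd_above_weighted_path[OF _ Zc] \<open>E01 f\<close> E01_const[of 1] by fastforce+
  have "(\<forall>t\<in>{0..1}. procV Z U t \<omega> \<le> ereal (s * \<bar>f t\<bar>)) \<longleftrightarrow>
      (\<forall>t\<in>{0..1}. if 0 \<le> U \<omega> then - s * (\<bar>f t\<bar> * Z t \<omega>) \<le> U \<omega> else Z t \<omega> \<le> 0)"
    unfolding procV_def procY_def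
  proof (intro ball_cong refl)
    fix t :: real assume "t \<in> {0..1}"
    then have "0 \<le> Z t \<omega>" using Zn by simp
    moreover have "s * \<bar>f t\<bar> \<le> 0" using \<open>s \<le> 0\<close> by (simp add: mult_nonpos_nonneg)
    ultimately show "- (1 / (ereal (Z t \<omega>) / ereal (U \<omega>))) \<le> ereal (s * \<bar>f t\<bar>) \<longleftrightarrow>
        (if 0 \<le> U \<omega> then - s * (\<bar>f t\<bar> * Z t \<omega>) \<le> U \<omega> else Z t \<omega> \<le> 0)"
      by (subst neg_inverse_ereal_ratio_le_iff) auto
  qed
  also have "\<dots> \<longleftrightarrow> (if 0 \<le> U \<omega> then - s * (SUP t\<in>{0..1}. \<bar>f t\<bar> * Z t \<omega>) \<le> U \<omega>
      else (SUP t\<in>{0..1}. Z t \<omega>) \<le> 0)"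
    using mult_cSUP_le_iff[OF bdd(1), of "- s"] \<open>s \<le> 0\<close> bdd(2) by (simp add: cSUP_le_iff)
  finally show ?thesis .
qed

lemma Wf_eq_measure_weighted_sup_le:
  assumes Zm: "\<forall>t\<in>{0..1}. Z t \<in> borel_measurable M"
    and Zc: "\<forall>\<omega>\<in>space M. continuous_on {0..1} (\<lambda>t. Z t \<omega>)"
    and Zn: "\<forall>\<omega>\<in>space M. \<forall>t\<in>{0..1}. Z t \<omega> \<ge> 0"
    and [measurable]: "U \<in> borel_measurable M" and U_nonneg: "AE \<omega> in M. 0 \<le> U \<omega>"
    and "E01 f" and "s \<le> 0"
  shows "Wf M Z U f s = measure M {\<omega>\<in>space M. - s * (SUP t\<in>{0..1}. \<bar>f t\<bar> * Z t \<omega>) \<le> U \<omega>}"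
proof -
  define g where "g = (\<lambda>\<omega>. SUP t\<in>{0..1}. \<bar>f t\<bar> * Z t \<omega>)"
  define g1 where "g1 = (\<lambda>\<omega>. SUP t\<in>{0..1}. Z t \<omega>)"
  have G: "(\<lambda>\<omega>. \<lambda>t\<in>{0..1}. Z t \<omega>) \<in> measurable M (PiM {0..1} (\<lambda>_. borel))"
    using Zm by (intro measurable_restrict) auto
  have [measurable]: "g \<in> borel_measurable M" "g1 \<in> borel_measurable M"
    using E01_weighted_sup_measurable[OF \<open>E01 f\<close> G Zc]
      E01_weighted_sup_measurable[OF E01_const G Zc, of 1]
    by (simp_all add: g_def g1_def)
  define E where "E = {\<omega>\<in>space M. \<forall>t\<in>{0..1}. procV Z U t \<omega> \<le> ereal (s * \<bar>f t\<bar>)}"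
  \<comment> \<open>The null set where \<open>U < 0\<close> is kept in the description of \<open>E\<close> only to show \<open>E \<in> sets M\<close>.\<close>
  have E_eq: "E = {\<omega>\<in>space M. if 0 \<le> U \<omega> then - s * g \<omega> \<le> U \<omega> else g1 \<omega> \<le> 0}"
    unfolding E_def g_def g1_def using Zc Zn \<open>E01 f\<close> \<open>s \<le> 0\<close>
    by (intro Collect_cong conj_cong refl procV_le_iff_weighted_sup) auto
  then have "E \<in> sets M" by simp
  have "Wf M Z U f s = measure M E"
    by (simp add: Wf_def E_def)
  also have "\<dots> = measure M {\<omega>\<in>space M. - s * g \<omega> \<le> U \<omega>}"
    using \<open>E \<in> sets M\<close> U_nonneg E_eq by (intro measure_eq_AE) auto
  finally show ?thesis by (simp add: g_def)
qed

lemma (in prob_space) indep_var_if_measurable_vimage_algebras: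
  assumes indep: "indep_set (sets (vimage_algebra (space M) G1 K1)) (sets (vimage_algebra (space M) G2 K2))"
    and "X \<in> measurable M N" "X \<in> measurable (vimage_algebra (space M) G1 K1) N"
    and "Y \<in> measurable M N'" "Y \<in> measurable (vimage_algebra (space M) G2 K2) N'"
  shows "indep_var N X N' Y"
proof -
  have sub: "sets (vimage_algebra (space M) X N) \<subseteq> sets (vimage_algebra (space M) G1 K1)"
    "sets (vimage_algebra (space M) Y N') \<subseteq> sets (vimage_algebra (space M) G2 K2)"
    using assms(3,5) by (simp_all add: measurable_iff_sets)
  have "indep_sets (case_bool (sets (vimage_algebra (space M) X N))
      (sets (vimage_algebra (space M) Y N'))) UNIV"
    using indep unfolding indep_set_def
    by (rule indep_sets_mono_sets) (use sub in \<open>simp split: bool.split\<close>)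
  with assms(2,4) show ?thesis
    by (simp add: indep_var_eq indep_set_def sets_vimage_algebra)
qed

lemma emeasure_uniform_unit_interval_atLeast:
  "emeasure (uniform_measure lborel {0..1}) {y..} = ennreal (min 1 (1 - y))"
proof -
  consider "y \<le> 0" | "0 < y" "y \<le> 1" | "1 < y" by linarith
  then have "emeasure lborel ({y..} \<inter> {0..1}) = ennreal (min 1 (1 - y))"
  proof cases
    case 1
    then have "{y..} \<inter> {0..1} = {0..1::real}" by auto
    then show ?thesis using 1 by simp
  next
    case 2
    then have "{y..} \<inter> {0..1} = {y..1::real}" by auto
    then show ?thesis using 2 by simp
  qed (simp add: ennreal_neg)
  then show ?thesis by (simp add: divide_ennreal_def Int_commute)
qed

lemma (in prob_space) prob_le_indep_uniform:
  assumes indep: "indep_var borel U borel X"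
    and U_unif: "distr M borel U = uniform_measure lborel {0..1}"
    and X_unit: "AE \<omega> in M. 0 \<le> X \<omega> \<and> X \<omega> \<le> 1"
  shows "prob {\<omega>\<in>space M. X \<omega> \<le> U \<omega>} = 1 - expectation X"
proof -
  have [measurable]: "U \<in> borel_measurable M" "X \<in> borel_measurable M"
    using indep_var_rv1[OF indep] indep_var_rv2[OF indep] by simp_all
  have X_int: "integrable M X"
    using X_unit by (intro integrable_const_bound[where B=1]) auto
  interpret UX: pair_sigma_finite "distr M borel U" "distr M borel X"
    by (intro pair_sigma_finite.intro prob_space_imp_sigma_finite prob_space_distr) simp_all
  define A :: "(real \<times> real) set" where "A = {p \<in> space (borel \<Otimes>\<^sub>M borel). snd p \<le> fst p}"
  have [measurable]: "A \<in> sets (borel \<Otimes>\<^sub>M borel)"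
    unfolding A_def by measurable
  have "emeasure M {\<omega>\<in>space M. X \<omega> \<le> U \<omega>} = emeasure M ((\<lambda>\<omega>. (U \<omega>, X \<omega>)) -` A \<inter> space M)"
    by (auto simp: A_def space_pair_measure intro!: arg_cong[where f="emeasure M"])
  also have "\<dots> = emeasure (distr M (borel \<Otimes>\<^sub>M borel) (\<lambda>\<omega>. (U \<omega>, X \<omega>))) A"
    by (rule emeasure_distr[symmetric]) simp_all
  also have "\<dots> = emeasure (distr M borel U \<Otimes>\<^sub>M distr M borel X) A"
    using indep by (simp add: indep_var_distribution_eq)
  also have "\<dots> = (\<integral>\<^sup>+y. emeasure (distr M borel U) ((\<lambda>u. (u, y)) -` A) \<partial>distr M borel X)"
    by (rule UX.emeasure_pair_measure_alt2) simp
  also have "\<dots> = (\<integral>\<^sup>+y. emeasure (distr M borel U) {y..} \<partial>distr M borel X)"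
    by (intro nn_integral_cong arg_cong2[where f=emeasure]) (auto simp: A_def space_pair_measure)
  also have "\<dots> = (\<integral>\<^sup>+\<omega>. ennreal (min 1 (1 - X \<omega>)) \<partial>M)"
    by (simp add: U_unif emeasure_uniform_unit_interval_atLeast nn_integral_distr)
  also have "\<dots> = (\<integral>\<^sup>+\<omega>. ennreal (1 - X \<omega>) \<partial>M)"
    using X_unit by (intro nn_integral_cong_AE) auto
  also have "\<dots> = ennreal (1 - expectation X)"
    using X_unit X_int by (subst nn_integral_eq_integral) (auto simp: prob_space)
  moreover have "expectation X \<le> 1"
    using X_unit X_int integral_mono_AE[of M X "\<lambda>_. 1"] by (simp add: prob_space)
  ultimately show ?thesis
    by (simp add: measure_def)
qed

lemma (in prob_space) prob_scaled_le_indep_uniform: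
  assumes indep: "indep_var borel U borel X"
    and "distr M borel U = uniform_measure lborel {0..1}"
    and X_bounds: "AE \<omega> in M. 0 \<le> X \<omega> \<and> X \<omega> \<le> B" and "0 \<le> c" "c * B \<le> 1"
  shows "prob {\<omega>\<in>space M. c * X \<omega> \<le> U \<omega>} = 1 - c * expectation X"
proof -
  have "indep_var borel U borel (\<lambda>\<omega>. c * X \<omega>)"
    using indep_var_compose[OF indep measurable_ident, of "\<lambda>x. c * x"] by (simp add: comp_def)
  moreover have "AE \<omega> in M. 0 \<le> c * X \<omega> \<and> c * X \<omega> \<le> 1"
    using X_bounds by eventually_elim (use \<open>0 \<le> c\<close> \<open>c * B \<le> 1\<close> in \<open>auto intro: order.trans[OF mult_left_mono]\<close>)
  ultimately show ?thesis
    using prob_le_indep_uniform[OF _ assms(2)] by simp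
qed

theorem mainTheorem8:
  fixes M :: "'a measure" and Z :: "real \<Rightarrow> 'a \<Rightarrow> real" and U :: "'a \<Rightarrow> real"
    and m :: real and f :: "real \<Rightarrow> real"
  assumes "prob_space M"
    and "\<forall>t\<in>{0..1}. Z t \<in> borel_measurable M"
    and "\<forall>\<omega>\<in>space M. continuous_on {0..1} (\<lambda>t. Z t \<omega>)"
    and "\<forall>\<omega>\<in>space M. \<forall>t\<in>{0..1}. Z t \<omega> \<ge> 0"
    and "m \<ge> 1"
    and "AE \<omega> in M. (SUP t\<in>{0..1}. Z t \<omega>) = m"
    and "\<forall>t\<in>{0..1}. prob_space.expectation M (Z t) = 1"
    and "U \<in> borel_measurable M"
    and "distr M borel U = uniform_measure lborel {0..1}"
    and "prob_space.indep_set M (sets (vimage_algebra (space M) U borel))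
       (sets (vimage_algebra (space M) (\<lambda>\<omega>. \<lambda>t\<in>{0..1}. Z t \<omega>) (PiM {0..1} (\<lambda>_. borel))))"
    and "E01_neg f"
    and "sup_norm01 f \<le> m"
  shows "\<exists>s0<0. \<forall>s\<in>{s0..0}. Wf M Z U f s = 1 + s * D_norm M Z f"
proof -
  interpret prob_space M by fact
  have f: "E01 f" using assms(11) by (simp add: E01_neg_def)
  define g where "g = (\<lambda>\<omega>. SUP t\<in>{0..1}. \<bar>f t\<bar> * Z t \<omega>)"
  have paths: "(\<lambda>\<omega>. \<lambda>t\<in>{0..1}. Z t \<omega>) \<in> measurable M (PiM {0..1} (\<lambda>_. borel))"
    using assms(2) by (intro measurable_restrict) auto
  have "indep_var borel U borel g"
    unfolding g_def using assms(3,8) paths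
    by (intro indep_var_if_measurable_vimage_algebras[OF assms(10)] E01_weighted_sup_measurable[OF f]
        measurable_vimage_algebra1) (auto simp: space_PiM)
  have g_bounds: "AE \<omega> in M. 0 \<le> g \<omega> \<and> g \<omega> \<le> m * m"
    unfolding g_def using assms(6)
    by (intro AE_E01_weighted_sup_bounds[OF assms(3,4) _ f assms(12)]) (auto elim: eventually_mono)
  show ?thesis
  proof (intro exI[of _ "- 1 / (m * m)"] conjI ballI)
    fix s assume s: "s \<in> {- 1 / (m * m)..0}"
    then have "- s * (m * m) \<le> 1" using \<open>m \<ge> 1\<close> by (simp add: field_simps)
    then have "prob {\<omega>\<in>space M. - s * g \<omega> \<le> U \<omega>} = 1 + s * expectation g"
      using prob_scaled_le_indep_uniform[OF \<open>indep_var borel U borel g\<close> assms(9) g_bounds, where c="- s"] s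
      by simp
    then show "Wf M Z U f s = 1 + s * D_norm M Z f"
      using Wf_eq_measure_weighted_sup_le[OF assms(2,3,4,8) AE_nonneg_uniform_unit_interval[OF assms(8,9)] f] s
      by (simp add: D_norm_def g_def)
  qed (use \<open>m \<ge> 1\<close> in simp)
qed

end
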